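(* Let $1\le D\le K-1$ and let $\mathbf{L}$ be the $(K,D)$ AIR matrix. Let $i\in[0:\lceil l/2\rceil]$, let $k\in C_i$, and let $k_R=k-(K-D-\lambda_{2i-1})$. If $\lambda_{2i}>0$, write $k_R=c\lambda_{2i}+d$ with integers $c\ge0$ and $0\le d<\lambda_{2i}$; then the down-distance of $\mathbf{L}(k,k)$ is $$d_{down}(k)=D+\lambda_{2i+1}+(\beta_{2i}-1-c)\lambda_{2i}.$$ If $\lambda_{2i}=0$ (which happens exactly when $l$ is odd and $i=\lceil l/2\rceil$), then $d_{down}(k)=D$.
   Context: Notation: $[a:b]=\{a,\dots,b\}$. Let $K,D$ be integers with $1\le D\le K-1$. Define $\lambda_{-1}=K-D$, $\lambda_0=D$ and recursively, by Euclidean division, $\lambda_{i-1}=\beta_i\lambda_i+\lambda_{i+1}$ with $0\le\lambda_{i+1}<\lambda_i$, for $i=0,1,2,\dots$, stopping at the index $l\ge 0$ with $\lambda_{l+1}=0$; $\beta_0\ge0$ may be $0$, $\beta_i\ge1$ for $i\ge1$. Set $\lambda_j=0$ and $\beta_j=0$ for $j>l$. For $n\mid m$, $\mathbf{I}_{m\times n}$ is $m/n$ copies of the $n\times n$ identity stacked vertically and $\mathbf{I}_{n\times m}$ its transpose. The $(K,D)$ AIR matrix $\mathbf{L}$ is the $K\times(K-D)$ $0/1$ matrix (rows $[0:K-1]$, columns $[0:K-D-1]$) that is zero except in the blocks: the $(K-D)\times(K-D)$ identity in rows and columns $[0:K-D-1]$; for $0\le 2i\le l$, the even submatrix $\mathbf{I}_{\lambda_{2i}\times\beta_{2i}\lambda_{2i}}$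 in rows $[K-\lambda_{2i}:K-1]$, columns $[K-D-\lambda_{2i-1}:K-D-\lambda_{2i+1}-1]$ (absent if $i=0,\beta_0=0$); for $1\le 2i+1\le l$, the odd submatrix $\mathbf{I}_{\beta_{2i+1}\lambda_{2i+1}\times\lambda_{2i+1}}$ in rows $[K-\lambda_{2i}:K-\lambda_{2i+2}-1]$, columns $[K-D-\lambda_{2i+1}:K-D-1]$. Column intervals: $C_i=[K-D-\lambda_{2i-1}:K-D-\lambda_{2i+1}-1]$, $0\le i\le\lceil l/2\rceil$. Down-distance: for $k\in[0:K-D-1]$ (where $\mathbf{L}(k,k)=1$), let $k'$ be the largest row index with $k'>k$ and $\mathbf{L}(k',k)=1$; then $d_{down}(k)=k'-k$. *)

theory Defs
  imports Main
begin

text \<open>Euclidean sequence. lamS K D n stands for lambda_(n-1), i.e. the index is shifted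
  by one so that lambda_(-1) = K - D is lamS K D 0 and lambda_0 = D is lamS K D 1.
  Once a zero is reached, all later terms are 0 (the convention lambda_j = 0 for j > l).\<close>
fun lamS :: "nat \<Rightarrow> nat \<Rightarrow> nat \<Rightarrow> nat" where
  "lamS K D 0 = K - D"
| "lamS K D (Suc 0) = D"
| "lamS K D (Suc (Suc n)) =
     (if lamS K D (Suc n) = 0 then 0 else lamS K D n mod lamS K D (Suc n))"

definition lam :: "nat \<Rightarrow> nat \<Rightarrow> int \<Rightarrow> int" where
  "lam K D j = int (lamS K D (nat (j + 1)))"

definition beta :: "nat \<Rightarrow> nat \<Rightarrow> int \<Rightarrow> int" where
  "beta K D j = (if lam K D j = 0 then 0 else lam K D (j - 1) div lam K D j)"

definition lidx :: "nat \<Rightarrow> nat \<Rightarrow> nat" where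
  "lidx K D = (LEAST j::nat. lam K D (int j + 1) = 0)"

text \<open>The (K,D) AIR matrix, rows [0:K-1], columns [0:K-D-1], entries 0/1.
  Blocks: identity in rows/columns [0:K-D-1];
  even blocks I_(lambda_2i x beta_2i lambda_2i) (transpose of stacked identities: entry (a,b)=1 iff b mod lambda_2i = a);
  odd blocks I_(beta_(2i+1) lambda_(2i+1) x lambda_(2i+1)) (stacked identities: entry (a,b)=1 iff a mod lambda_(2i+1) = b).\<close>
definition AIR :: "nat \<Rightarrow> nat \<Rightarrow> nat \<Rightarrow> nat \<Rightarrow> nat" where
  "AIR K D r c =
    (let R = int r; C = int c; KK = int K; DD = int D; l = lidx K D in
     if R < KK \<and> C < KK - DD \<and>
        ( (R < KK - DD \<and> R = C)
        \<or> (\<exists>i::nat. 2 * i \<le> l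
              \<and> KK - lam K D (2 * int i) \<le> R \<and> R \<le> KK - 1
              \<and> KK - DD - lam K D (2 * int i - 1) \<le> C
              \<and> C \<le> KK - DD - lam K D (2 * int i + 1) - 1
              \<and> (C - (KK - DD - lam K D (2 * int i - 1))) mod lam K D (2 * int i)
                  = R - (KK - lam K D (2 * int i)))
        \<or> (\<exists>i::nat. 1 \<le> 2 * i + 1 \<and> 2 * i + 1 \<le> l
              \<and> KK - lam K D (2 * int i) \<le> R
              \<and> R \<le> KK - lam K D (2 * int i + 2) - 1
              \<and> KK - DD - lam K D (2 * int i + 1) \<le> C \<and> C \<le> KK - DD - 1
              \<and> (R - (KK - lam K D (2 * int i))) mod lam K D (2 * int i + 1)
                  = C - (KK - DD - lam K D (2 * int i + 1))))
     then 1 else 0)"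

definition Cint :: "nat \<Rightarrow> nat \<Rightarrow> nat \<Rightarrow> int set" where
  "Cint K D i = {int K - int D - lam K D (2 * int i - 1) .. int K - int D - lam K D (2 * int i + 1) - 1}"

definition ddown :: "nat \<Rightarrow> nat \<Rightarrow> nat \<Rightarrow> int" where
  "ddown K D k = int (GREATEST k'. k' > k \<and> k' < K \<and> AIR K D k' k = 1) - int k"

end

theory Submission
  imports Defs
begin

text \<open>Column \<open>k \<in> C\<^sub>i\<close> meets only the even block \<open>i\<close> (the even blocks occupy the disjoint
  column intervals \<open>C\<^sub>j\<close>) and the odd blocks \<open>j < i\<close>. If \<open>\<lambda>\<^sub>2\<^sub>i > 0\<close> the even block \<open>i\<close> has its
  single entry of column \<open>k\<close> in row \<open>K - \<lambda>\<^sub>2\<^sub>i + d\<close>, below all odd blocks \<open>j < i\<close>, which gives the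
  formula after writing \<open>\<lambda>\<^sub>2\<^sub>i\<^sub>-\<^sub>1 = \<beta>\<^sub>2\<^sub>i \<lambda>\<^sub>2\<^sub>i + \<lambda>\<^sub>2\<^sub>i\<^sub>+\<^sub>1\<close>. If \<open>\<lambda>\<^sub>2\<^sub>i = 0\<close>, then \<open>l = 2i - 1\<close> and the
  last odd block stacks \<open>\<lambda>\<^sub>l\<^sub>-\<^sub>1 / \<lambda>\<^sub>l\<close> identities of size \<open>\<lambda>\<^sub>l\<close> down to row \<open>K - 1\<close>; the lowest
  entry of column \<open>k\<close> there is in row \<open>k + D\<close>.\<close>

abbreviation lamN :: "nat \<Rightarrow> nat \<Rightarrow> nat \<Rightarrow> int" where
  "lamN K D n \<equiv> int (lamS K D n)"

lemma lamS_Suc_le: "1 \<le> n \<Longrightarrow> lamS K D (Suc n) \<le> lamS K D n"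
  by (cases n) auto

lemma lamS_antimono: assumes "1 \<le> m" "m \<le> n" shows "lamS K D n \<le> lamS K D m"
  using assms(2)
proof (induction n rule: dec_induct)
  case (step n)
  then show ?case using lamS_Suc_le[of n K D] assms(1) by linarith
qed simp

lemma lamN_antimono: "1 \<le> m \<Longrightarrow> m \<le> n \<Longrightarrow> lamN K D n \<le> lamN K D m"
  using lamS_antimono by simp

lemma lamS_eventually_zero: assumes "1 \<le> D" shows "\<exists>j. lamS K D (j + 2) = 0"
proof (rule ccontr)
  assume "\<not> ?thesis"
  then have nonzero: "\<And>j. lamS K D (Suc (Suc j)) \<noteq> 0" by simp
  have "lamS K D (Suc n) + n \<le> D" for n
  proof (induction n)
    case (Suc n)
    have "0 < lamS K D (Suc n)" using nonzero assms by (cases n) auto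
    then have "lamS K D (Suc (Suc n)) < lamS K D (Suc n)" by simp
    with Suc.IH show ?case by linarith
  qed simp
  from this[of "D + 1"] show False by simp
qed

lemma lam_plus_one_eq: "lam K D (int j + 1) = lamN K D (j + 2)"
  unfolding lam_def by (simp add: nat_add_distrib)

lemma lam_even_eq: "lam K D (2 * int i) = lamN K D (2 * i + 1)"
  unfolding lam_def by (simp add: nat_add_distrib nat_mult_distrib)

lemma lam_even_minus_one_eq: "lam K D (2 * int i - 1) = lamN K D (2 * i)"
  unfolding lam_def by (simp add: nat_mult_distrib)

lemma lam_odd_eq: "lam K D (2 * int i + 1) = lamN K D (2 * i + 2)"
  unfolding lam_def by (simp add: nat_add_distrib nat_mult_distrib)

lemma lam_odd_plus_one_eq: "lam K D (2 * int i + 2) = lamN K D (2 * i + 3)"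
proof -
  have "nat (2 * int i + 2 + 1) = 2 * i + 3" by simp
  then show ?thesis unfolding lam_def by metis
qed

lemma beta_even_eq:
  "beta K D (2 * int i) =
     (if lamS K D (2 * i + 1) = 0 then 0 else lamN K D (2 * i) div lamN K D (2 * i + 1))"
  unfolding beta_def by (simp add: lam_even_eq lam_even_minus_one_eq)

lemma Cint_eq: "Cint K D i = {int K - int D - lamN K D (2 * i) .. int K - int D - lamN K D (2 * i + 2) - 1}"
  unfolding Cint_def lam_even_minus_one_eq lam_odd_eq ..

lemma lidx_eq_Least: "lidx K D = (LEAST j. lamS K D (j + 2) = 0)"
  unfolding lidx_def lam_plus_one_eq by simp

lemma lamS_lidx_plus_two: "1 \<le> D \<Longrightarrow> lamS K D (lidx K D + 2) = 0"
  unfolding lidx_eq_Least using lamS_eventually_zero by (rule LeastI_ex)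

lemma lamS_pos_iff:
  assumes "1 \<le> D" "D < K"
  shows "0 < lamS K D n \<longleftrightarrow> n \<le> lidx K D + 1"
proof
  assume "0 < lamS K D n"
  moreover have "lamS K D n = 0" if "lidx K D + 2 \<le> n"
    using lamS_antimono[OF _ that, of K D] lamS_lidx_plus_two[OF assms(1)] by simp
  ultimately show "n \<le> lidx K D + 1" by linarith
next
  assume n: "n \<le> lidx K D + 1"
  consider "n = 0" | "n = 1" | j where "n = j + 2"
    by (metis One_nat_def add_2_eq_Suc' not0_implies_Suc)
  then show "0 < lamS K D n"
  proof cases
    case 3
    with n have "j < lidx K D" by simp
    then have "lamS K D (j + 2) \<noteq> 0" unfolding lidx_eq_Least by (rule not_less_Least)
    with 3 show ?thesis by simp
  qed (use assms in auto)
qed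

lemma AIR_eq_1_iff: "AIR K D r c = 1 \<longleftrightarrow>
  (int r < int K \<and> int c < int K - int D \<and>
   ((int r < int K - int D \<and> r = c)
   \<or> (\<exists>i. 2 * i \<le> lidx K D
        \<and> int K - lamN K D (2 * i + 1) \<le> int r \<and> int r \<le> int K - 1
        \<and> int K - int D - lamN K D (2 * i) \<le> int c
        \<and> int c \<le> int K - int D - lamN K D (2 * i + 2) - 1
        \<and> (int c - (int K - int D - lamN K D (2 * i))) mod lamN K D (2 * i + 1)
            = int r - (int K - lamN K D (2 * i + 1)))
   \<or> (\<exists>i. 2 * i + 1 \<le> lidx K D
        \<and> int K - lamN K D (2 * i + 1) \<le> int r \<and> int r \<le> int K - lamN K D (2 * i + 3) - 1
        \<and> int K - int D - lamN K D (2 * i + 2) \<le> int c \<and> int c \<le> int K - int D - 1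
        \<and> (int r - (int K - lamN K D (2 * i + 1))) mod lamN K D (2 * i + 2)
            = int c - (int K - int D - lamN K D (2 * i + 2)))))"
  unfolding AIR_def Let_def lam_even_eq lam_even_minus_one_eq lam_odd_eq lam_odd_plus_one_eq
  by auto

lemma ddown_eqI:
  assumes "k < t" "t < K" "AIR K D t k = 1"
    and "\<And>y. k < y \<Longrightarrow> y < K \<Longrightarrow> AIR K D y k = 1 \<Longrightarrow> y \<le> t"
  shows "ddown K D k = int t - int k"
proof -
  have "(GREATEST y. k < y \<and> y < K \<and> AIR K D y k = 1) = t"
    using assms by (intro Greatest_equality) auto
  then show ?thesis unfolding ddown_def by simp
qed

lemma below_diagonal_entry_cases:
  assumes k: "int K - int D - lamN K D (2 * i) \<le> int k" "int k \<le> int K - int D - lamN K D (2 * i + 2) - 1"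
    and entry: "AIR K D y k = 1" and "k < y"
  obtains
    "2 * i \<le> lidx K D"
    "int y = int K - lamN K D (2 * i + 1)
               + (int k - (int K - int D - lamN K D (2 * i))) mod lamN K D (2 * i + 1)"
  | j where "j < i" "2 * j + 1 \<le> lidx K D"
    "int K - lamN K D (2 * j + 1) \<le> int y" "int y \<le> int K - lamN K D (2 * j + 3) - 1"
    "(int y - (int K - lamN K D (2 * j + 1))) mod lamN K D (2 * j + 2)
       = int k - (int K - int D - lamN K D (2 * j + 2))"
proof -
  from entry[unfolded AIR_eq_1_iff] \<open>k < y\<close> consider
      j where "2 * j \<le> lidx K D" "int K - int D - lamN K D (2 * j) \<le> int k"
        "int k \<le> int K - int D - lamN K D (2 * j + 2) - 1"
        "(int k - (int K - int D - lamN K D (2 * j))) mod lamN K D (2 * j + 1)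
           = int y - (int K - lamN K D (2 * j + 1))"
    | j where "2 * j + 1 \<le> lidx K D"
        "int K - lamN K D (2 * j + 1) \<le> int y" "int y \<le> int K - lamN K D (2 * j + 3) - 1"
        "int K - int D - lamN K D (2 * j + 2) \<le> int k"
        "(int y - (int K - lamN K D (2 * j + 1))) mod lamN K D (2 * j + 2)
           = int k - (int K - int D - lamN K D (2 * j + 2))"
    by auto
  then show thesis
  proof cases
    case (1 j)
    have "j = i"
    proof (rule ccontr)
      assume "j \<noteq> i"
      then consider "j < i" | "i < j" by linarith
      then show False
      proof cases
        case 1
        then have "lamN K D (2 * i) \<le> lamN K D (2 * j + 2)" by (intro lamN_antimono) auto
        with \<open>int k \<le> int K - int D - lamN K D (2 * j + 2) - 1\<close> k(1) show False by linarith
      next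
        case 2
        then have "lamN K D (2 * j) \<le> lamN K D (2 * i + 2)" by (intro lamN_antimono) auto
        with \<open>int K - int D - lamN K D (2 * j) \<le> int k\<close> k(2) show False by linarith
      qed
    qed
    with 1 that(1) show thesis by simp
  next
    case (2 j)
    have "j < i"
    proof (rule ccontr)
      assume "\<not> j < i"
      then have "lamN K D (2 * j + 2) \<le> lamN K D (2 * i + 2)" by (intro lamN_antimono) auto
      with \<open>int K - int D - lamN K D (2 * j + 2) \<le> int k\<close> k(2) show False by linarith
    qed
    with 2 that(2) show thesis by blast
  qed
qed

lemma mod_residue_le:
  fixes p z n x :: int
  assumes "0 < p" "0 \<le> z" "z < n * p" "z mod p = x"
  shows "z \<le> (n - 1) * p + x"
proof -
  have z: "z = (z div p) * p + x" using assms(4) div_mult_mod_eq[of z p] by simp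
  have "(z div p) * p < n * p" using z assms(1,3,4) pos_mod_sign[of p z] by linarith
  then have "z div p \<le> n - 1" using assms(1) by (simp add: mult_less_cancel_right)
  then have "(z div p) * p \<le> (n - 1) * p" using assms(1) by (simp add: mult_right_mono)
  then show ?thesis using z by linarith
qed

lemma ddown_even_block:
  fixes c d :: int
  assumes "1 \<le> D" "D < K"
    and k: "int K - int D - lamN K D (2 * i) \<le> int k" "int k \<le> int K - int D - lamN K D (2 * i + 2) - 1"
    and b_pos: "0 < lamS K D (2 * i + 1)"
    and "0 \<le> c" "0 \<le> d" "d < lamN K D (2 * i + 1)"
    and k_eq: "int k - (int K - int D - lamN K D (2 * i)) = c * lamN K D (2 * i + 1) + d"
  shows "ddown K D k = int D + lamN K D (2 * i + 2)
           + (lamN K D (2 * i) div lamN K D (2 * i + 1) - 1 - c) * lamN K D (2 * i + 1)"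
proof -
  define a b e where "a = lamN K D (2 * i)" and "b = lamN K D (2 * i + 1)"
    and "e = lamN K D (2 * i + 2)"
  have "lamS K D (Suc (Suc (2 * i))) = lamS K D (2 * i) mod lamS K D (Suc (2 * i))"
    using b_pos by simp
  then have "e = a mod b" unfolding a_def b_def e_def by (simp add: of_nat_mod)
  then have a_eq: "(a div b) * b + e = a" by simp
  have "0 < b" using b_pos b_def by simp
  have "c * b < (a div b) * b" using k_eq k(2) a_eq \<open>0 \<le> d\<close> unfolding a_def b_def e_def by linarith
  then have "(c + 1) * b \<le> (a div b) * b"
    using \<open>0 < b\<close> by (simp add: mult_less_cancel_right mult_right_mono)
  have "b \<le> int D" using lamS_antimono[of 1 "2 * i + 1" K D] b_def by simp
  define t where "t = nat (int K - b + d)"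
  have t: "int t = int K - b + d" unfolding t_def using \<open>b \<le> int D\<close> \<open>D < K\<close> \<open>0 \<le> d\<close> by simp
  have residue: "(int k - (int K - int D - a)) mod b = d"
    using k_eq \<open>0 \<le> d\<close> \<open>d < lamN K D (2 * i + 1)\<close> unfolding a_def b_def by simp
  have "2 * i \<le> lidx K D"
    using b_pos lamS_pos_iff[OF assms(1,2), of "2 * i + 1"] by simp
  have "ddown K D k = int t - int k"
  proof (rule ddown_eqI)
    show "k < t" using t k_eq a_eq \<open>(c + 1) * b \<le> (a div b) * b\<close> \<open>1 \<le> D\<close>
      unfolding a_def b_def e_def by (simp add: algebra_simps)
    show "t < K" using t \<open>d < lamN K D (2 * i + 1)\<close> b_def by simp
    show "AIR K D t k = 1" unfolding AIR_eq_1_iff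
      using \<open>2 * i \<le> lidx K D\<close> t residue k \<open>d < lamN K D (2 * i + 1)\<close> \<open>0 \<le> d\<close> \<open>b \<le> int D\<close>
      unfolding a_def b_def by (intro conjI disjI2 disjI1 exI[of _ i]) auto
  next
    fix y assume "k < y" "y < K" "AIR K D y k = 1"
    from k this(3,1) show "y \<le> t"
    proof (cases rule: below_diagonal_entry_cases)
      case 1
      then show ?thesis using t residue unfolding a_def b_def by simp
    next
      case (2 j)
      then have "lamN K D (2 * i + 1) \<le> lamN K D (2 * j + 3)" by (intro lamN_antimono) auto
      with 2 t \<open>0 \<le> d\<close> b_def show ?thesis by linarith
    qed
  qed
  also have "\<dots> = int D + e + (a div b - 1 - c) * b"
    using t k_eq a_eq unfolding a_def b_def e_def by (simp add: algebra_simps)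
  finally show ?thesis unfolding a_def b_def e_def .
qed

lemma ddown_last_odd_block:
  assumes "1 \<le> D" "D < K"
    and k: "int K - int D - lamN K D (2 * i) \<le> int k" "int k \<le> int K - int D - lamN K D (2 * i + 2) - 1"
    and b_zero: "lamS K D (2 * i + 1) = 0" and "2 * i \<le> lidx K D + 1"
  shows "ddown K D k = int D"
proof -
  have last: "2 * i = lidx K D + 1"
    using b_zero \<open>2 * i \<le> lidx K D + 1\<close> lamS_pos_iff[OF assms(1,2), of "2 * i + 1"] by simp
  then obtain i0 where i: "i = Suc i0" by (cases i) auto
  define g a where "g = lamN K D (2 * i0 + 1)" and "a = lamN K D (2 * i)"
  have "0 < lamS K D (2 * i)" using lamS_pos_iff[OF assms(1,2)] last by simp
  then have "0 < a" unfolding a_def by simp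
  have "lamS K D (Suc (Suc (2 * i0 + 1))) = 0" using b_zero i by simp
  then have "lamS K D (2 * i0 + 1) mod lamS K D (2 * i0 + 2) = 0"
    using \<open>0 < lamS K D (2 * i)\<close> i by (simp split: if_splits)
  then have "g mod a = 0" unfolding g_def a_def i by (simp flip: of_nat_mod)
  then obtain n where g_eq: "g = n * a" by (metis dvd_def mod_0_imp_dvd mult.commute)
  have "a \<le> g" unfolding a_def g_def i by (intro lamN_antimono) auto
  have "lamS K D (2 * i + 2) = 0"
    using lamS_pos_iff[OF assms(1,2), of "2 * i + 2"] last by simp
  with k have k': "int K - int D - a \<le> int k" "int k \<le> int K - int D - 1"
    unfolding a_def by auto
  define x where "x = int k - (int K - int D - a)"
  have "0 \<le> x" "x < a" using k' x_def \<open>1 \<le> D\<close> by auto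
  have "lamS K D (2 * i0 + 3) = 0" using b_zero i by (simp add: numeral_3_eq_3)
  have "2 * i0 + 1 = lidx K D" using last i by simp
  have "ddown K D k = int (k + D) - int k"
  proof (rule ddown_eqI)
    show "k < k + D" using \<open>1 \<le> D\<close> by simp
    show "k + D < K" using k' by simp
    have "int (k + D) - (int K - g) = x + (n - 1) * a"
      using x_def g_eq by (simp add: algebra_simps)
    then have "(int (k + D) - (int K - g)) mod a = x" using \<open>0 \<le> x\<close> \<open>x < a\<close> by simp
    then show "AIR K D (k + D) k = 1" unfolding AIR_eq_1_iff
      using \<open>2 * i0 + 1 = lidx K D\<close> k' \<open>a \<le> g\<close> \<open>lamS K D (2 * i0 + 3) = 0\<close> x_def
      unfolding a_def g_def i by (intro conjI disjI2 exI[of _ i0]) (auto simp del: lamS.simps)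
  next
    fix y assume "k < y" "y < K" "AIR K D y k = 1"
    from k this(3,1) show "y \<le> k + D"
    proof (cases rule: below_diagonal_entry_cases)
      case 1
      with last show ?thesis by simp
    next
      case (2 j)
      then consider (lower) "j < i0" | (same) "j = i0" using i by linarith
      then show ?thesis
      proof cases
        case lower
        then have "lamN K D (2 * i0 + 1) \<le> lamN K D (2 * j + 3)" by (intro lamN_antimono) auto
        with 2 k' \<open>a \<le> g\<close> show ?thesis unfolding g_def by linarith
      next
        case same
        define z where "z = int y - (int K - g)"
        have "0 \<le> z" "z < n * a" "z mod a = x"
          using 2(3-5) same i g_eq \<open>lamS K D (2 * i0 + 3) = 0\<close>
          unfolding z_def g_def a_def x_def by simp_all
        then have "z \<le> (n - 1) * a + x" using mod_residue_le \<open>0 < a\<close> by blast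
        then show ?thesis using z_def g_eq x_def by (simp add: algebra_simps)
      qed
    qed
  qed
  then show ?thesis by simp
qed

lemma lam_even_eq_0_iff:
  assumes "1 \<le> D" "D < K" "i \<le> (lidx K D + 1) div 2"
  shows "lam K D (2 * int i) = 0 \<longleftrightarrow> odd (lidx K D) \<and> i = (lidx K D + 1) div 2"
  using lamS_pos_iff[OF assms(1,2), of "2 * i + 1"] assms(3) unfolding lam_even_eq by presburger

theorem lemma1:
  fixes K D i k :: nat
  assumes "1 \<le> D" and "D \<le> K - 1"
    and "i \<le> (lidx K D + 1) div 2"
    and "int k \<in> Cint K D i"
  shows "(lam K D (2 * int i) > 0 \<longrightarrow>
            (\<forall>c d :: int. 0 \<le> c \<and> 0 \<le> d \<and> d < lam K D (2 * int i)
               \<and> int k - (int K - int D - lam K D (2 * int i - 1)) = c * lam K D (2 * int i) + d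
               \<longrightarrow> ddown K D k = int D + lam K D (2 * int i + 1)
                      + (beta K D (2 * int i) - 1 - c) * lam K D (2 * int i)))
       \<and> (lam K D (2 * int i) = 0 \<longleftrightarrow> (odd (lidx K D) \<and> i = (lidx K D + 1) div 2))
       \<and> (lam K D (2 * int i) = 0 \<longrightarrow> ddown K D k = int D)"
proof -
  have "D < K" using assms(1,2) by linarith
  have "2 * i \<le> lidx K D + 1" using assms(3) by linarith
  from assms(4) have k:
    "int K - int D - lamN K D (2 * i) \<le> int k" "int k \<le> int K - int D - lamN K D (2 * i + 2) - 1"
    unfolding Cint_eq by auto
  note zero_iff = lam_even_eq_0_iff[OF assms(1) \<open>D < K\<close> assms(3)]
  have even_block: "ddown K D k = int D + lam K D (2 * int i + 1)
                      + (beta K D (2 * int i) - 1 - c) * lam K D (2 * int i)"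
    if "lam K D (2 * int i) > 0" "0 \<le> c" "0 \<le> d" "d < lam K D (2 * int i)"
      "int k - (int K - int D - lam K D (2 * int i - 1)) = c * lam K D (2 * int i) + d"
    for c d :: int
    using that ddown_even_block[OF assms(1) \<open>D < K\<close> k, of c d]
    unfolding lam_even_eq lam_even_minus_one_eq lam_odd_eq beta_even_eq by simp
  have last_block: "ddown K D k = int D" if "lam K D (2 * int i) = 0"
    using that ddown_last_odd_block[OF assms(1) \<open>D < K\<close> k _ \<open>2 * i \<le> lidx K D + 1\<close>]
    unfolding lam_even_eq by simp
  show ?thesis using even_block zero_iff last_block by blast
qed

end
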